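(* Let $a>0$, $b\ge0$, $\eta>0$, $\alpha>0$. Let $(r_t)_{t\ge0}$ be real numbers satisfying $r_{t+1}\le r_t-\alpha\frac a2r_t^2+\alpha\frac b\eta$ for all $t\ge0$, and define $\rho_0=r_0$, $\rho_{t+1}=\rho_t-\alpha\frac a2\rho_t^2+\alpha\frac b\eta$ for $t\ge0$. If $\alpha\le\frac{1}{a\rho_t}$ (for all $t$), then $\rho_t\ge r_t$ for every $t\ge0$. *)

theory Defs
  imports Complex_Main
begin

end

theory Submission
  imports Defs
begin

(* The map x \<mapsto> x - c x^2 + d is nondecreasing on (-\<infinity>, 1/(2c)], and the hypothesis on
   \<alpha> says exactly that every \<rho> t lies in this range. A sequence satisfying the recursion
   with \<le> therefore stays below the one satisfying it with equality, by induction. *)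

lemma le_inverse_imp_mult_le_one:
  fixes \<alpha> x :: real
  assumes "0 < \<alpha>" and "\<alpha> \<le> 1 / x"
  shows "\<alpha> * x \<le> 1"
proof -
  have "0 < x"
  proof (rule ccontr)
    assume "\<not> 0 < x"
    then have "1 / x \<le> 0"
      by simp
    with assms show False
      by linarith
  qed
  with assms(2) show ?thesis
    by (simp add: field_simps)
qed

lemma diff_square_mono:
  fixes c x y :: real
  assumes "0 \<le> c" and "x \<le> y" and "2 * c * y \<le> 1"
  shows "x - c * x^2 \<le> y - c * y^2"
proof -
  have "c * x \<le> c * y"
    using assms(1,2) by (rule mult_left_mono[rotated])
  then have "c * (x + y) \<le> 1"
    using assms(3) by (simp add: distrib_left)
  then have "0 \<le> (y - x) * (1 - c * (x + y))"
    using assms(2) by simp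
  also have "\<dots> = (y - c * y^2) - (x - c * x^2)"
    by (simp add: algebra_simps power2_eq_square)
  finally show ?thesis
    by (simp only: diff_ge_0_iff_ge)
qed

lemma recurrence_comparison:
  fixes f :: "real \<Rightarrow> real" and r \<rho> :: "nat \<Rightarrow> real"
  assumes "r 0 \<le> \<rho> 0"
    and "\<And>t. r (Suc t) \<le> f (r t)"
    and "\<And>t. f (\<rho> t) \<le> \<rho> (Suc t)"
    and "\<And>t x. x \<le> \<rho> t \<Longrightarrow> f x \<le> f (\<rho> t)"
  shows "r t \<le> \<rho> t"
proof (induction t)
  case 0
  show ?case using assms(1) .
next
  case (Suc t)
  have "r (Suc t) \<le> f (r t)" by (fact assms(2))
  also have "\<dots> \<le> f (\<rho> t)" using Suc.IH by (rule assms(4))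
  also have "\<dots> \<le> \<rho> (Suc t)" by (fact assms(3))
  finally show ?case .
qed

theorem lemmaC7:
  fixes a b \<eta> \<alpha> :: real and r \<rho> :: "nat \<Rightarrow> real"
  assumes "a > 0" and "b \<ge> 0" and "\<eta> > 0" and "\<alpha> > 0"
    and "\<And>t. r (Suc t) \<le> r t - \<alpha> * (a / 2) * (r t)^2 + \<alpha> * (b / \<eta>)"
    and "\<rho> 0 = r 0"
    and "\<And>t. \<rho> (Suc t) = \<rho> t - \<alpha> * (a / 2) * (\<rho> t)^2 + \<alpha> * (b / \<eta>)"
    and "\<And>t. \<alpha> \<le> 1 / (a * \<rho> t)"
  shows "\<forall>t. \<rho> t \<ge> r t"
proof
  fix t
  let ?f = "\<lambda>x. x - \<alpha> * (a / 2) * x^2 + \<alpha> * (b / \<eta>)"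
  show "r t \<le> \<rho> t"
  proof (rule recurrence_comparison[where f = ?f])
    show "r 0 \<le> \<rho> 0"
      using assms(6) by simp
    show "r (Suc s) \<le> ?f (r s)" for s
      by (fact assms(5))
    show "?f (\<rho> s) \<le> \<rho> (Suc s)" for s
      by (simp add: assms(7))
    show "?f x \<le> ?f (\<rho> s)" if "x \<le> \<rho> s" for s x
    proof -
      have "2 * (\<alpha> * (a / 2)) * \<rho> s \<le> 1"
        using le_inverse_imp_mult_le_one[OF assms(4,8)] by (simp add: mult.assoc)
      with \<open>x \<le> \<rho> s\<close> have "x - \<alpha> * (a / 2) * x^2 \<le> \<rho> s - \<alpha> * (a / 2) * (\<rho> s)^2"
        by (intro diff_square_mono) (use assms(1,4) in auto)
      then show ?thesis
        by simp
    qed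
  qed
qed

end
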